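(* Let $T$, $S$, $A$ be closed subspaces in $X^2$ with $D(T)=D(S)=:D\subset D(A)$ and $T=S+A$. Then $T(0)^\perp\subset S(0)^\perp$ and $T(0)^\perp\subset A(0)^\perp$; let $P:S(0)^\perp\to T(0)^\perp$ and $Q:A(0)^\perp\to T(0)^\perp$ be the orthogonal projections. Then $$T_sx=PS_sx+QA_sx\quad\text{for all }x\in D.$$ Furthermore, if $S$ and $A$ are Hermitian subspaces in $X^2$, then $PS_s$ and $QA_s$ (restricted to $D$) are Hermitian operators in $D$, i.e. $\langle PS_sx,y\rangle=\langle x,PS_sy\rangle$ and $\langle QA_sx,y\rangle=\langle x,QA_sy\rangle$ for all $x,y\in D$.
   Context: $X$ is a complex Hilbert space and $X^2=X\times X$ carries the inner product $\langle (x,f),(y,g)\rangle=\langle x,y\rangle+\langle f,g\rangle$. A subspace $T$ in $X^2$ means a linear subspace of $X^2$ (a linear relation); a linear operator in $X$ is identified with its graph. Notation: $D(T)=\{x:(x,f)\in T \text{ for some } f\}$, $R(T)=\{f:(x,f)\in T \text{ for some } x\}$, $T(x)=\{f:(x,f)\in T\}$. The adjoint is $T^*=\{(y,g)\in X^2:\langle g,x\rangle=\langle y,f\rangle \text{ for all }(x,f)\in T\}$; $T$ is Hermitian if $T\subset T^*$ and self-adjoint if $T=T^*$. For subspaces $S,A$ in $X^2$, $S+A=\{(x,f+g):(x,f)\in S,(x,g)\in A\}$. For a closed subspace $T$, set $T_\infty=\{(0,g)\in X^2:(0,g)\in T\}$ and $T_s=T\ominus T_\infty$ (orthogonal complement of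 $T_\infty$ in $T$), so $T=T_s\oplus T_\infty$; $T_s$ is the graph of a linear operator (the operator part of $T$) with $D(T_s)=D(T)$ and $R(T_s)\subset T(0)^\perp$, and it is regarded as an operator in $T(0)^\perp$. *)

theory Defs
  imports "HOL-Analysis.Analysis"
begin

class complex_vector = real_vector +
  fixes scaleC :: "complex \<Rightarrow> 'a \<Rightarrow> 'a" (infixr "*\<^sub>C" 75)
  assumes scaleC_add_right: "a *\<^sub>C (x + y) = a *\<^sub>C x + a *\<^sub>C y"
    and scaleC_add_left: "(a + b) *\<^sub>C x = a *\<^sub>C x + b *\<^sub>C x"
    and scaleC_scaleC: "a *\<^sub>C (b *\<^sub>C x) = (a * b) *\<^sub>C x"
    and scaleC_one: "1 *\<^sub>C x = x"
    and scaleR_scaleC: "scaleR r x = complex_of_real r *\<^sub>C x"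

text \<open>Complex inner product, linear in the first argument; its real part is the
  underlying real inner product (which induces the norm and the topology).\<close>
class complex_inner = real_inner + complex_vector +
  fixes cinner :: "'a \<Rightarrow> 'a \<Rightarrow> complex"
  assumes cinner_commute: "cinner x y = cnj (cinner y x)"
    and cinner_add_left: "cinner (x + y) z = cinner x z + cinner y z"
    and cinner_scaleC_left: "cinner (a *\<^sub>C x) y = a * cinner x y"
    and Re_cinner: "Re (cinner x y) = inner x y"

class chilbert_space = complex_inner + complete_space

definition linear_relation :: "('a::complex_vector \<times> 'a) set \<Rightarrow> bool" where
  "linear_relation T \<longleftrightarrow> (0, 0) \<in> T
     \<and> (\<forall>p\<in>T. \<forall>q\<in>T. (fst p + fst q, snd p + snd q) \<in> T)
     \<and> (\<forall>c. \<forall>p\<in>T. (c *\<^sub>C fst p, c *\<^sub>C snd p) \<in> T)"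

definition pinner :: "'a::complex_inner \<times> 'a \<Rightarrow> 'a \<times> 'a \<Rightarrow> complex" where
  "pinner p q = cinner (fst p) (fst q) + cinner (snd p) (snd q)"

definition orth :: "'a::complex_inner set \<Rightarrow> 'a set" where
  "orth M = {y. \<forall>x\<in>M. cinner x y = 0}"

definition adjoint_rel :: "('a::complex_inner \<times> 'a) set \<Rightarrow> ('a \<times> 'a) set" where
  "adjoint_rel T = {(y, g). \<forall>(x, f)\<in>T. cinner g x = cinner y f}"

definition hermitian_rel :: "('a::complex_inner \<times> 'a) set \<Rightarrow> bool" where
  "hermitian_rel T \<longleftrightarrow> T \<subseteq> adjoint_rel T"

definition rel_sum :: "('a::complex_vector \<times> 'a) set \<Rightarrow> ('a \<times> 'a) set \<Rightarrow> ('a \<times> 'a) set" where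
  "rel_sum S A = {(x, f + g) | x f g. (x, f) \<in> S \<and> (x, g) \<in> A}"

definition T_inf :: "('a::complex_vector \<times> 'a) set \<Rightarrow> ('a \<times> 'a) set" where
  "T_inf T = {p \<in> T. fst p = 0}"

definition T_s :: "('a::complex_inner \<times> 'a) set \<Rightarrow> ('a \<times> 'a) set" where
  "T_s T = {p \<in> T. \<forall>q\<in>T_inf T. pinner p q = 0}"

definition op_part :: "('a::complex_inner \<times> 'a) set \<Rightarrow> 'a \<Rightarrow> 'a" where
  "op_part T x = (THE f. (x, f) \<in> T_s T)"

definition orth_proj :: "'a::complex_inner set \<Rightarrow> 'a \<Rightarrow> 'a" where
  "orth_proj M v = (THE m. m \<in> M \<and> v - m \<in> orth M)"

end

theory Submission
  imports Defs
begin

text \<open>Since \<open>T(0) = S(0) + A(0)\<close>, the complement \<open>T(0)\<^sup>\<perp>\<close> lies in \<open>S(0)\<^sup>\<perp>\<close> and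
  \<open>A(0)\<^sup>\<perp>\<close>. The operator part \<open>R\<^sub>s x\<close> of a closed relation is the orthogonal projection
  onto \<open>R(0)\<^sup>\<perp>\<close> of any \<open>f\<close> with \<open>(x, f) \<in> R\<close>; taking \<open>f = S\<^sub>s x + A\<^sub>s x\<close> for \<open>T\<close>,
  linearity of the projection gives the decomposition. The domain of a Hermitian relation is
  orthogonal to its multivalued part, so \<open>D \<subseteq> T(0)\<^sup>\<perp>\<close>, and projecting onto \<open>T(0)\<^sup>\<perp>\<close>
  does not change inner products with elements of \<open>D\<close>. The projections themselves come from
  the nearest-point theorem for closed convex sets in a complete inner product space.\<close>

lemma parallelogram_law_midpoint:
  fixes a p q :: "'a::real_inner"
  shows "norm (p - q)^2 = 2 * norm (a - p)^2 + 2 * norm (a - q)^2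
    - 4 * norm (a - ((1/2) *\<^sub>R p + (1/2) *\<^sub>R q))^2"
  unfolding power2_norm_eq_inner
  by (simp add: inner_diff_left inner_diff_right inner_add_left inner_add_right inner_commute algebra_simps)

lemma infdist_approx:
  fixes S :: "'a::metric_space set"
  assumes "S \<noteq> {}" "0 < e"
  shows "\<exists>y\<in>S. dist a y < infdist a S + e"
proof -
  have "Inf ((\<lambda>y. dist a y) ` S) < infdist a S + e"
    using assms by (simp add: infdist_notempty)
  then show ?thesis
    using cInf_lessD[of "(\<lambda>y. dist a y) ` S"] assms(1) by blast
qed

lemma convex_minimizing_sequence_Cauchy:
  fixes S :: "'a::real_inner set"
  assumes "convex S" "\<And>n. f n \<in> S" "(\<lambda>n. dist a (f n)) \<longlonglongrightarrow> infdist a S"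
  shows "Cauchy f"
proof (rule metric_CauchyI)
  define d where "d = infdist a S"
  have gap: "(dist (f m) (f n))^2 \<le> 2 * (dist a (f m))^2 + 2 * (dist a (f n))^2 - 4 * d^2" for m n
  proof -
    have "(1/2) *\<^sub>R f m + (1/2) *\<^sub>R f n \<in> S"
      using convexD[OF assms(1) assms(2) assms(2)] by simp
    then have "d \<le> dist a ((1/2) *\<^sub>R f m + (1/2) *\<^sub>R f n)"
      unfolding d_def by (rule infdist_le)
    then have "d^2 \<le> norm (a - ((1/2) *\<^sub>R f m + (1/2) *\<^sub>R f n))^2"
      by (simp add: d_def dist_norm infdist_nonneg power_mono)
    then show ?thesis
      using parallelogram_law_midpoint[of "f m" "f n" a] by (simp add: dist_norm)
  qed
  fix e :: real assume "0 < e"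
  have "(\<lambda>n. (dist a (f n))^2) \<longlonglongrightarrow> d^2"
    unfolding d_def using assms(3) by (intro tendsto_intros)
  moreover have "d^2 < d^2 + e^2 / 4"
    using \<open>0 < e\<close> by simp
  ultimately have "\<forall>\<^sub>F n in sequentially. (dist a (f n))^2 < d^2 + e^2 / 4"
    by (rule order_tendstoD(2))
  then obtain N where N: "\<And>n. N \<le> n \<Longrightarrow> (dist a (f n))^2 < d^2 + e^2 / 4"
    by (auto simp: eventually_sequentially)
  have "dist (f m) (f n) < e" if "N \<le> m" "N \<le> n" for m n
  proof -
    have "(dist (f m) (f n))^2 < e^2"
      using gap[of m n] N[OF that(1)] N[OF that(2)] by linarith
    then show ?thesis
      using \<open>0 < e\<close> by (simp add: power_less_imp_less_base)
  qed
  then show "\<exists>N. \<forall>m\<ge>N. \<forall>n\<ge>N. dist (f m) (f n) < e"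
    by blast
qed

lemma nearest_point_exists:
  fixes S :: "'a::{real_inner, complete_space} set"
  assumes "convex S" "closed S" "S \<noteq> {}"
  obtains x where "x \<in> S" "\<And>y. y \<in> S \<Longrightarrow> dist a x \<le> dist a y"
proof -
  define d where "d = infdist a S"
  have "\<forall>n. \<exists>y\<in>S. dist a y < d + 1 / Suc n"
    unfolding d_def using infdist_approx[OF assms(3)] by simp
  then obtain f where f: "\<And>n. f n \<in> S" "\<And>n. dist a (f n) < d + 1 / Suc n"
    by metis
  have lim: "(\<lambda>n. dist a (f n)) \<longlonglongrightarrow> d"
  proof (rule tendsto_sandwich)
    show "\<forall>\<^sub>F n in sequentially. d \<le> dist a (f n)"
      using f(1) unfolding d_def by (intro always_eventually allI infdist_le)
    show "\<forall>\<^sub>F n in sequentially. dist a (f n) \<le> d + 1 / Suc n"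
      using f(2) by (intro always_eventually allI less_imp_le)
    show "(\<lambda>n. d + 1 / Suc n) \<longlonglongrightarrow> d"
      using tendsto_add[OF tendsto_const LIMSEQ_Suc[OF lim_const_over_n[of 1]], of d] by simp
  qed simp
  then have "Cauchy f"
    unfolding d_def by (rule convex_minimizing_sequence_Cauchy[OF assms(1) f(1)])
  then obtain x where x: "f \<longlonglongrightarrow> x"
    using Cauchy_convergent convergent_def by blast
  have "x \<in> S"
    using closed_sequentially[OF assms(2)] f(1) x by blast
  moreover have "dist a x = d"
    using tendsto_unique[OF _ tendsto_dist[OF tendsto_const x] lim] by simp
  ultimately show ?thesis
    using that by (simp add: d_def infdist_le)
qed

lemma cinner_add_right: "cinner x (y + z) = cinner x y + cinner x z"
  by (metis cinner_add_left cinner_commute complex_cnj_add)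

lemma cinner_diff_left: "cinner (x - y) z = cinner x z - cinner y z"
  by (metis cinner_add_left eq_diff_eq)

lemma cinner_diff_right: "cinner x (y - z) = cinner x y - cinner x z"
  by (metis cinner_commute cinner_diff_left complex_cnj_diff)

lemma cinner_zero_left [simp]: "cinner 0 y = 0"
  using cinner_diff_left[of 0 0 y] by simp

lemma cinner_zero_right [simp]: "cinner y 0 = 0"
  using cinner_diff_right[of y 0 0] by simp

lemma cinner_eq_zero_commute: "cinner x y = 0 \<longleftrightarrow> cinner y x = 0"
  by (metis cinner_commute complex_cnj_zero_iff)

lemma cinner_self_eq_zero: "cinner x x = 0 \<longleftrightarrow> x = 0"
  by (metis Re_cinner cinner_zero_left inner_eq_zero_iff zero_complex.sel(1))

lemma scaleC_minus_one: "(-1) *\<^sub>C x = - x"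
  using scaleR_scaleC[of "-1" x] by simp

definition csubspace :: "'a::complex_vector set \<Rightarrow> bool" where
  "csubspace M \<longleftrightarrow> 0 \<in> M \<and> (\<forall>a\<in>M. \<forall>b\<in>M. a + b \<in> M) \<and> (\<forall>c. \<forall>a\<in>M. c *\<^sub>C a \<in> M)"

lemma csubspace_0: "csubspace M \<Longrightarrow> 0 \<in> M"
  unfolding csubspace_def by blast

lemma csubspace_add: "csubspace M \<Longrightarrow> a \<in> M \<Longrightarrow> b \<in> M \<Longrightarrow> a + b \<in> M"
  unfolding csubspace_def by blast

lemma csubspace_scaleC: "csubspace M \<Longrightarrow> a \<in> M \<Longrightarrow> c *\<^sub>C a \<in> M"
  unfolding csubspace_def by blast

lemma csubspace_scaleR: "csubspace M \<Longrightarrow> a \<in> M \<Longrightarrow> c *\<^sub>R a \<in> M"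
  by (simp add: csubspace_scaleC scaleR_scaleC)

lemma csubspace_diff: "csubspace M \<Longrightarrow> a \<in> M \<Longrightarrow> b \<in> M \<Longrightarrow> a - b \<in> M"
  by (metis csubspace_add csubspace_scaleC diff_conv_add_uminus scaleC_minus_one)

lemma csubspace_imp_convex: "csubspace M \<Longrightarrow> convex M"
  unfolding convex_def by (simp add: csubspace_add csubspace_scaleR)

lemma orth_add: "a \<in> orth M \<Longrightarrow> b \<in> orth M \<Longrightarrow> a + b \<in> orth M"
  unfolding orth_def by (simp add: cinner_add_right)

lemma orth_diff: "a \<in> orth M \<Longrightarrow> b \<in> orth M \<Longrightarrow> a - b \<in> orth M"
  unfolding orth_def by (simp add: cinner_diff_right)

lemma orth_antimono: "M \<subseteq> N \<Longrightarrow> orth N \<subseteq> orth M"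
  unfolding orth_def by auto

lemma subset_orth_orth: "M \<subseteq> orth (orth M)"
  unfolding orth_def using cinner_eq_zero_commute by blast

lemma orth_proj_eqI:
  assumes "m \<in> orth M" "v - m \<in> M"
  shows "orth_proj (orth M) v = m"
  unfolding orth_proj_def
proof (rule the_equality)
  show "m \<in> orth M \<and> v - m \<in> orth (orth M)"
    using assms subset_orth_orth by blast
  fix m' assume m': "m' \<in> orth M \<and> v - m' \<in> orth (orth M)"
  have "m' - m \<in> orth M"
    using m' assms(1) orth_diff by blast
  moreover have "m' - m \<in> orth (orth M)"
    using orth_diff[of "v - m" "orth M" "v - m'"] m' assms(2) subset_orth_orth by auto
  ultimately have "cinner (m' - m) (m' - m) = 0"
    unfolding orth_def by blast
  then show "m' = m"
    by (simp add: cinner_self_eq_zero)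
qed

text \<open>The nearest point of the real subspace M is orthogonal in the real sense; applying this
  to \<open>\<i> *\<^sub>C w\<close> kills the imaginary part of the complex inner product as well.\<close>
lemma orthogonal_decomposition:
  fixes M :: "'a::chilbert_space set"
  assumes "csubspace M" "closed M"
  obtains m where "m \<in> M" "v - m \<in> orth M"
proof -
  obtain m where m: "m \<in> M" "\<And>y. y \<in> M \<Longrightarrow> dist v m \<le> dist v y"
    using nearest_point_exists[OF csubspace_imp_convex[OF assms(1)] assms(2)]
      csubspace_0[OF assms(1)] by blast
  have real_orth: "inner (v - m) w = 0" if "w \<in> M" for w
  proof -
    have "m + w \<in> M" "m - w \<in> M"
      using assms(1) m(1) that by (simp_all add: csubspace_add csubspace_diff)
    then have "inner (v - m) ((m + w) - m) \<le> 0" "inner (v - m) ((m - w) - m) \<le> 0"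
      using any_closest_point_dot[OF csubspace_imp_convex[OF assms(1)] assms(2) m(1)] m(2) by blast+
    then show ?thesis
      by (simp add: inner_minus_right)
  qed
  have "cinner w (v - m) = 0" if "w \<in> M" for w
  proof -
    have "\<i> *\<^sub>C w \<in> M"
      using assms(1) that by (rule csubspace_scaleC)
    then have "Re (cinner (\<i> *\<^sub>C w) (v - m)) = 0"
      by (metis Re_cinner inner_commute real_orth)
    moreover have "Re (cinner w (v - m)) = 0"
      using real_orth[OF that] by (simp add: Re_cinner inner_commute)
    ultimately show ?thesis
      by (simp add: cinner_scaleC_left complex_eq_iff)
  qed
  then show ?thesis
    using that m(1) unfolding orth_def by blast
qed

lemma orth_proj_orth:
  fixes M :: "'a::chilbert_space set"
  assumes "csubspace M" "closed M"
  shows "orth_proj (orth M) v \<in> orth M" "v - orth_proj (orth M) v \<in> M"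
proof -
  obtain m where "m \<in> M" "v - m \<in> orth M"
    using orthogonal_decomposition[OF assms] .
  then have "orth_proj (orth M) v = v - m"
    by (intro orth_proj_eqI) simp_all
  then show "orth_proj (orth M) v \<in> orth M" "v - orth_proj (orth M) v \<in> M"
    using \<open>m \<in> M\<close> \<open>v - m \<in> orth M\<close> by simp_all
qed

lemma orth_proj_add:
  fixes M :: "'a::chilbert_space set"
  assumes "csubspace M" "closed M"
  shows "orth_proj (orth M) (u + v) = orth_proj (orth M) u + orth_proj (orth M) v"
proof (rule orth_proj_eqI)
  show "orth_proj (orth M) u + orth_proj (orth M) v \<in> orth M"
    using orth_proj_orth[OF assms] by (simp add: orth_add)
  have "(u - orth_proj (orth M) u) + (v - orth_proj (orth M) v) \<in> M"
    using orth_proj_orth[OF assms] by (simp add: csubspace_add[OF assms(1)])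
  then show "u + v - (orth_proj (orth M) u + orth_proj (orth M) v) \<in> M"
    by (simp add: algebra_simps)
qed

lemma linear_relation_add:
  "linear_relation R \<Longrightarrow> (x, f) \<in> R \<Longrightarrow> (y, g) \<in> R \<Longrightarrow> (x + y, f + g) \<in> R"
  unfolding linear_relation_def by (metis fst_conv snd_conv)

lemma linear_relation_diff:
  assumes "linear_relation R" "(x, f) \<in> R" "(y, g) \<in> R"
  shows "(x - y, f - g) \<in> R"
proof -
  have "((-1) *\<^sub>C y, (-1) *\<^sub>C g) \<in> R"
    using assms(1,3) unfolding linear_relation_def by (metis fst_conv snd_conv)
  then show ?thesis
    using linear_relation_add[OF assms(1,2)] by (force simp: scaleC_minus_one)
qed

lemma scaleC_zero_right [simp]: "c *\<^sub>C (0::'a::complex_vector) = 0"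
  using scaleC_add_right[of c "0::'a" 0] by simp

lemma csubspace_Image_zero: "linear_relation R \<Longrightarrow> csubspace (R `` {0})"
  unfolding csubspace_def linear_relation_def by (metis Image_singleton_iff add_0 fst_conv scaleC_zero_right snd_conv)

lemma closed_Image_singleton:
  fixes R :: "('a::t2_space \<times> 'b::t2_space) set"
  assumes "closed R"
  shows "closed (R `` {a})"
proof -
  have "R `` {a} = Pair a -` R"
    by auto
  then show ?thesis
    using continuous_closed_vimage[OF assms, of "Pair a"]
    by (simp add: continuous_Pair[OF continuous_const continuous_ident])
qed

lemma op_part_eqI:
  assumes R: "linear_relation R" and xf: "(x, f) \<in> R"
    and g: "g \<in> orth (R `` {0})" "f - g \<in> R `` {0}"
  shows "op_part R x = g"
  unfolding op_part_def
proof (rule the_equality)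
  have xg: "(x, g) \<in> R"
    using linear_relation_diff[OF R xf, of 0 "f - g"] g(2) by simp
  have "pinner (x, g) (0, h) = 0" if "(0, h) \<in> R" for h
    using g(1) that cinner_eq_zero_commute unfolding orth_def pinner_def by auto
  then show "(x, g) \<in> T_s R"
    unfolding T_s_def T_inf_def using xg by auto
  fix g' assume g': "(x, g') \<in> T_s R"
  then have "(x - x, g - g') \<in> R"
    using linear_relation_diff[OF R xg] unfolding T_s_def by blast
  then have inf: "(0, g - g') \<in> T_inf R"
    unfolding T_inf_def by simp
  then have "cinner g' (g - g') = 0"
    using g' unfolding T_s_def pinner_def by auto
  moreover have "cinner g (g - g') = 0"
    using g(1) inf cinner_eq_zero_commute unfolding orth_def T_inf_def by auto
  ultimately have "cinner (g - g') (g - g') = 0"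
    by (simp add: cinner_diff_left)
  then show "g' = g"
    by (simp add: cinner_self_eq_zero)
qed

lemma op_part_eq_orth_proj:
  fixes R :: "('a::chilbert_space \<times> 'a) set"
  assumes R: "linear_relation R" "closed R" and xf: "(x, f) \<in> R"
  shows "op_part R x = orth_proj (orth (R `` {0})) f"
  using orth_proj_orth[OF csubspace_Image_zero[OF R(1)] closed_Image_singleton[OF R(2)]]
  by (intro op_part_eqI[OF R(1) xf]) simp_all

lemma op_part_in_rel:
  fixes R :: "('a::chilbert_space \<times> 'a) set"
  assumes R: "linear_relation R" "closed R" and x: "x \<in> Domain R"
  shows "(x, op_part R x) \<in> R"
proof -
  obtain f where xf: "(x, f) \<in> R"
    using x by blast
  then have "f - op_part R x \<in> R `` {0}"
    using op_part_eq_orth_proj[OF R xf]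
      orth_proj_orth[OF csubspace_Image_zero[OF R(1)] closed_Image_singleton[OF R(2)]] by simp
  then show ?thesis
    using linear_relation_diff[OF R(1) xf, of 0 "f - op_part R x"] by simp
qed

lemma Domain_rel_sum: "Domain (rel_sum S A) = Domain S \<inter> Domain A"
  unfolding rel_sum_def by blast

lemma rel_sum_Image_zero:
  "rel_sum S A `` {0} = {f + g | f g. f \<in> S `` {0} \<and> g \<in> A `` {0}}"
  unfolding rel_sum_def by blast

lemma orth_sum:
  "orth M \<inter> orth N \<subseteq> orth {a + b | a b. a \<in> M \<and> b \<in> N}"
  unfolding orth_def by (auto simp: cinner_add_left)

lemma hermitian_Domain_orth:
  assumes "hermitian_rel R"
  shows "Domain R \<subseteq> orth (R `` {0})"
proof
  fix y assume "y \<in> Domain R"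
  then obtain h where "(y, h) \<in> adjoint_rel R"
    using assms unfolding hermitian_rel_def by blast
  then have "cinner y s = 0" if "(0, s) \<in> R" for s
    using that unfolding adjoint_rel_def by fastforce
  then show "y \<in> orth (R `` {0})"
    unfolding orth_def using cinner_eq_zero_commute by blast
qed

lemma hermitian_orth_proj:
  fixes M :: "'a::chilbert_space set"
  assumes M: "csubspace M" "closed M" and H: "hermitian_rel R"
    and xu: "(x, u) \<in> R" and yv: "(y, v) \<in> R" and xy: "x \<in> orth M" "y \<in> orth M"
  shows "cinner (orth_proj (orth M) u) y = cinner x (orth_proj (orth M) v)"
proof -
  have "cinner (u - orth_proj (orth M) u) y = 0"
    using orth_proj_orth(2)[OF M] xy(2) unfolding orth_def by blast
  then have "cinner (orth_proj (orth M) u) y = cinner u y"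
    by (simp add: cinner_diff_left)
  also have "\<dots> = cinner x v"
    using H xu yv unfolding hermitian_rel_def adjoint_rel_def by blast
  also have "cinner x (v - orth_proj (orth M) v) = 0"
    using orth_proj_orth(2)[OF M] xy(1) cinner_eq_zero_commute unfolding orth_def by blast
  then have "cinner x v = cinner x (orth_proj (orth M) v)"
    by (simp add: cinner_diff_right)
  finally show ?thesis .
qed

theorem theorem3p1:
  fixes T S A :: "('a::chilbert_space \<times> 'a) set"
  assumes "linear_relation T" "closed T"
    and "linear_relation S" "closed S"
    and "linear_relation A" "closed A"
    and "Domain T = Domain S" "Domain S \<subseteq> Domain A"
    and "T = rel_sum S A"
  shows "orth (T `` {0}) \<subseteq> orth (S `` {0}) \<and> orth (T `` {0}) \<subseteq> orth (A `` {0})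
    \<and> (\<forall>x\<in>Domain T. op_part T x =
          orth_proj (orth (T `` {0})) (op_part S x) + orth_proj (orth (T `` {0})) (op_part A x))
    \<and> (hermitian_rel S \<and> hermitian_rel A \<longrightarrow>
        (\<forall>x\<in>Domain T. \<forall>y\<in>Domain T.
           cinner (orth_proj (orth (T `` {0})) (op_part S x)) y
             = cinner x (orth_proj (orth (T `` {0})) (op_part S y))
         \<and> cinner (orth_proj (orth (T `` {0})) (op_part A x)) y
             = cinner x (orth_proj (orth (T `` {0})) (op_part A y))))"
proof -
  let ?M = "T `` {0}"
  let ?P = "orth_proj (orth ?M)"
  have M: "csubspace ?M" "closed ?M"
    using assms(1,2) by (simp_all add: csubspace_Image_zero closed_Image_singleton)
  have M_eq: "?M = {f + g | f g. f \<in> S `` {0} \<and> g \<in> A `` {0}}"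
    unfolding assms(9) by (rule rel_sum_Image_zero)
  have "0 \<in> S `` {0}" "0 \<in> A `` {0}"
    using assms(3,5) unfolding linear_relation_def by simp_all
  then have "S `` {0} \<subseteq> ?M" "A `` {0} \<subseteq> ?M"
    unfolding M_eq by force+
  then have orth_M: "orth ?M \<subseteq> orth (S `` {0}) \<and> orth ?M \<subseteq> orth (A `` {0})"
    by (simp add: orth_antimono)
  have op_S: "(x, op_part S x) \<in> S" and op_A: "(x, op_part A x) \<in> A" if "x \<in> Domain T" for x
    using that op_part_in_rel[OF assms(3,4)] op_part_in_rel[OF assms(5,6)]
    unfolding assms(9) Domain_rel_sum by simp_all
  have sum: "op_part T x = ?P (op_part S x) + ?P (op_part A x)" if "x \<in> Domain T" for x
  proof -
    have "(x, op_part S x + op_part A x) \<in> T"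
      unfolding assms(9) rel_sum_def using op_S[OF that] op_A[OF that] by blast
    then show ?thesis
      by (simp add: op_part_eq_orth_proj[OF assms(1,2)] orth_proj_add[OF M])
  qed
  have hermitian: "cinner (?P (op_part S x)) y = cinner x (?P (op_part S y))
      \<and> cinner (?P (op_part A x)) y = cinner x (?P (op_part A y))"
    if H: "hermitian_rel S" "hermitian_rel A" and x: "x \<in> Domain T" and y: "y \<in> Domain T" for x y
  proof -
    have "Domain T \<subseteq> orth ?M"
      using hermitian_Domain_orth[OF H(1)] hermitian_Domain_orth[OF H(2)] orth_sum[of "S `` {0}" "A `` {0}"]
      unfolding M_eq unfolding assms(9) Domain_rel_sum by blast
    then have "x \<in> orth ?M" "y \<in> orth ?M"
      using x y by blast+
    then show ?thesis
      using hermitian_orth_proj[OF M H(1) op_S[OF x] op_S[OF y]]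
        hermitian_orth_proj[OF M H(2) op_A[OF x] op_A[OF y]] by blast
  qed
  show ?thesis
    using orth_M sum hermitian by blast
qed

end
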